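(* Let $m\ge1$ and $p_1,\dots,p_m$ be distinct primes, and let $S=\{1\}\cup\{p_1,\dots,p_m\}\cup\{p_ip_j: 1\le i<j\le m\}$, so $|S|=\frac12(m^2+m+2)$. Then $[S]$ is invertible, $i_-([S])=m$ and $i_+([S])=1+\binom m2=\frac12(m^2-m+2)$.
   Context: The LCM matrix $[S]$ of $S=\{x_1,\dots,x_n\}$ has $(i,j)$ entry $\mathrm{lcm}(x_i,x_j)$; $i_+(M)$ and $i_-(M)$ denote the numbers of positive and negative eigenvalues (with multiplicity) of a real symmetric matrix $M$. *)

theory Defs
  imports "Jordan_Normal_Form.Char_Poly" "HOL-Computational_Algebra.Primes"
begin

definition lcm_matrix :: "nat set \<Rightarrow> real mat" where
  "lcm_matrix S = (let xs = sorted_list_of_set S in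
     mat (length xs) (length xs) (\<lambda>(i,j). real (lcm (xs ! i) (xs ! j))))"

definition pos_inertia :: "real mat \<Rightarrow> nat" where
  "pos_inertia M = (\<Sum>x\<in>{x. poly (char_poly M) x = 0 \<and> x > 0}. order x (char_poly M))"

definition neg_inertia :: "real mat \<Rightarrow> nat" where
  "neg_inertia M = (\<Sum>x\<in>{x. poly (char_poly M) x = 0 \<and> x < 0}. order x (char_poly M))"

end

theory Submission
  imports Defs
begin

text \<open>Let \<open>S\<close> be listed increasingly as \<open>x\<^sub>1 < \<dots> < x\<^sub>n\<close>. It consists of the products of
  at most two of the primes, so it is closed under divisors, and for squarefree \<open>s, t\<close>
  \<open>1 / gcd s t = \<Sum>\<^bsub>d | gcd s t\<^esub> w d\<close> with \<open>w d = \<Prod>\<^bsub>p | d\<^esub> (1/p - 1)\<close>. Hence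
  \<open>lcm x\<^sub>i x\<^sub>j = \<Sum>\<^sub>k R\<^sub>k\<^sub>i w(x\<^sub>k) R\<^sub>k\<^sub>j\<close> where \<open>R\<^sub>k\<^sub>i = x\<^sub>i\<close> if \<open>x\<^sub>k\<close> divides \<open>x\<^sub>i\<close> and \<open>0\<close>
  otherwise, i.e. \<open>[S] = R\<^sup>T diag(w(x\<^sub>k)) R\<close> with \<open>R\<close> upper triangular and invertible.
  By Sylvester's law of inertia \<open>[S]\<close> is invertible and its inertia is read off from the signs
  of the \<open>w(x\<^sub>k)\<close>: the sign of \<open>w d\<close> is \<open>(-1)\<close> to the number of prime factors of \<open>d\<close>, giving a
  positive eigenvalue for \<open>1\<close> and for each \<open>p\<^sub>i p\<^sub>j\<close> and a negative one for each \<open>p\<^sub>i\<close>.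
  Since inertia is defined through the roots of the characteristic polynomial, Sylvester's law
  is combined with the spectral theorem for real symmetric matrices, proved by deflation with
  Householder reflections.\<close>

section \<open>Sylvester's law of inertia for diagonal forms\<close>

lemma exists_vec_supported_with_supported_image:
  fixes R :: "'a :: field mat"
  assumes R: "R \<in> carrier_mat n n" and I: "I \<subseteq> {..<n}" and J: "J \<subseteq> {..<n}"
    and card: "n < card I + card J"
  shows "\<exists>u \<in> carrier_vec n. u \<noteq> 0\<^sub>v n \<and> (\<forall>i<n. i \<notin> I \<longrightarrow> u $ i = 0)
           \<and> (\<forall>j<n. j \<notin> J \<longrightarrow> (R *\<^sub>v u) $ j = 0)"
proof -
  define ic where "ic = sorted_list_of_set ({..<n} - I)"
  define jc where "jc = sorted_list_of_set ({..<n} - J)"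
  have len_ic: "length ic = n - card I" and len_jc: "length jc = n - card J"
    using I J finite_subset[OF I] finite_subset[OF J] by (simp_all add: ic_def jc_def card_Diff_subset)
  have "card I \<le> n" "card J \<le> n" using card_mono[OF finite_lessThan] I J by fastforce+
  hence short: "length ic + length jc < n" using len_ic len_jc card by linarith
  \<comment> \<open>Fewer than \<open>n\<close> linear constraints: the unit rows \<open>e\<^sub>i\<close> for \<open>i \<notin> I\<close> and the rows
    \<open>j \<notin> J\<close> of \<open>R\<close>; padded with zero rows they form a singular square matrix.\<close>
  define M where "M = mat n n (\<lambda>(r,c). if r < length ic then (if c = ic ! r then 1 else 0)
      else if r < length ic + length jc then R $$ (jc ! (r - length ic), c) else 0)"
  have M: "M \<in> carrier_mat n n" unfolding M_def by simp
  have "M = mat\<^sub>r n n (\<lambda>i. if i = n - 1 then 0\<^sub>v n else row M i)"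
    by (rule eq_matI) (use short in \<open>auto simp: M_def\<close>)
  hence "det M = 0" using det_row_0[of "n - 1" n "\<lambda>i. row M i"] short M by auto
  then obtain u where u: "u \<in> carrier_vec n" "u \<noteq> 0\<^sub>v n" "M *\<^sub>v u = 0\<^sub>v n"
    using det_0_iff_vec_prod_zero_field[OF M] by auto
  have Mu: "(M *\<^sub>v u) $ r = 0" if "r < n" for r using u(3) that by simp
  show ?thesis
  proof (intro bexI conjI allI impI)
    fix i assume i: "i < n" "i \<notin> I"
    hence "i \<in> set ic" by (simp add: ic_def)
    then obtain r where r: "r < length ic" "ic ! r = i" by (auto simp: in_set_conv_nth)
    have "(M *\<^sub>v u) $ r = u $ i"
      using r short u(1) i by (simp add: M_def scalar_prod_def if_distrib[of "\<lambda>x. x * _"] cong: if_cong)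
    thus "u $ i = 0" using Mu[of r] r short i by simp
  next
    fix j assume j: "j < n" "j \<notin> J"
    hence "j \<in> set jc" by (simp add: jc_def)
    then obtain t where t: "t < length jc" "jc ! t = j" by (auto simp: in_set_conv_nth)
    have "(M *\<^sub>v u) $ (length ic + t) = (R *\<^sub>v u) $ j"
      using t short u(1) R j by (auto simp: M_def scalar_prod_def)
    thus "(R *\<^sub>v u) $ j = 0" using Mu[of "length ic + t"] t short by simp
  qed (use u in auto)
qed

text \<open>Otherwise some \<open>u \<noteq> 0\<close> vanishes where \<open>a < 0\<close> while \<open>R u\<close> vanishes where \<open>b \<ge> 0\<close>,
  making the left form nonnegative and the right one negative.\<close>
lemma card_nonneg_add_card_neg_le:
  fixes R :: "real mat" and a b :: "nat \<Rightarrow> real"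
  assumes R: "R \<in> carrier_mat n n" "det R \<noteq> 0"
    and forms: "\<And>u. u \<in> carrier_vec n \<Longrightarrow> (\<Sum>i<n. a i * (u$i)^2) = (\<Sum>j<n. b j * ((R *\<^sub>v u)$j)^2)"
  shows "card {i. i < n \<and> 0 \<le> a i} + card {j. j < n \<and> b j < 0} \<le> n"
proof (rule ccontr)
  assume "\<not> ?thesis"
  then obtain u where u: "u \<in> carrier_vec n" "u \<noteq> 0\<^sub>v n"
    and supp: "\<And>i. i < n \<Longrightarrow> a i < 0 \<Longrightarrow> u $ i = 0"
    and supp_R: "\<And>j. j < n \<Longrightarrow> 0 \<le> b j \<Longrightarrow> (R *\<^sub>v u) $ j = 0"
    using exists_vec_supported_with_supported_image[OF R(1), of "{i. i < n \<and> 0 \<le> a i}" "{j. j < n \<and> b j < 0}"]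
    by force
  have "0 \<le> a i * (u$i)^2" if "i < n" for i
    using supp[OF that] by (cases "a i < 0") auto
  hence "0 \<le> (\<Sum>i<n. a i * (u$i)^2)" by (intro sum_nonneg) simp
  moreover have "(\<Sum>j<n. b j * ((R *\<^sub>v u)$j)^2) < 0"
  proof -
    have "R *\<^sub>v u \<noteq> 0\<^sub>v n" using u R det_0_iff_vec_prod_zero_field[OF R(1)] by blast
    then obtain k where k: "k < n" "(R *\<^sub>v u) $ k \<noteq> 0" using R by (auto simp: vec_eq_iff)
    hence "b k < 0" using supp_R not_le by blast
    have "(\<Sum>j<n. b j * ((R *\<^sub>v u)$j)^2) < (\<Sum>j<n. 0)"
    proof (rule sum_strict_mono_ex1)
      show "\<forall>j\<in>{..<n}. b j * ((R *\<^sub>v u)$j)^2 \<le> 0"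
      proof
        fix j assume "j \<in> {..<n}"
        thus "b j * ((R *\<^sub>v u)$j)^2 \<le> 0" using supp_R[of j] by (cases "0 \<le> b j") (auto simp: mult_nonpos_nonneg)
      qed
      show "\<exists>j\<in>{..<n}. b j * ((R *\<^sub>v u)$j)^2 < 0"
        using k \<open>b k < 0\<close> by (intro bexI[of _ k]) (simp_all add: mult_neg_pos)
    qed simp
    thus ?thesis by simp
  qed
  ultimately show False using forms[OF u(1)] by simp
qed

lemma card_pos_add_card_neg:
  fixes a :: "nat \<Rightarrow> real"
  assumes "\<And>i. i < n \<Longrightarrow> a i \<noteq> 0"
  shows "card {i. i < n \<and> 0 < a i} + card {i. i < n \<and> a i < 0} = n"
proof -
  have "{i. i < n \<and> 0 < a i} \<union> {i. i < n \<and> a i < 0} = {..<n}"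
    using assms by (auto simp: neq_iff)
  moreover have "card ({i. i < n \<and> 0 < a i} \<union> {i. i < n \<and> a i < 0})
      = card {i. i < n \<and> 0 < a i} + card {i. i < n \<and> a i < 0}"
    by (rule card_Un_disjoint) auto
  ultimately show ?thesis by simp
qed

lemma sylvester_diagonal_forms:
  fixes R :: "real mat" and a b :: "nat \<Rightarrow> real"
  assumes R: "R \<in> carrier_mat n n" "det R \<noteq> 0"
    and forms: "\<And>u. u \<in> carrier_vec n \<Longrightarrow> (\<Sum>i<n. a i * (u$i)^2) = (\<Sum>j<n. b j * ((R *\<^sub>v u)$j)^2)"
    and b: "\<And>j. j < n \<Longrightarrow> b j \<noteq> 0"
  shows "\<And>i. i < n \<Longrightarrow> a i \<noteq> 0"
    and "card {i. i < n \<and> 0 < a i} = card {j. j < n \<and> 0 < b j}"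
    and "card {i. i < n \<and> a i < 0} = card {j. j < n \<and> b j < 0}"
proof -
  have forms_neg: "(\<Sum>i<n. - a i * (u$i)^2) = (\<Sum>j<n. - b j * ((R *\<^sub>v u)$j)^2)"
    if "u \<in> carrier_vec n" for u
    using forms[OF that] by (simp add: sum_negf)
  have le: "card {i. i < n \<and> 0 \<le> a i} + card {j. j < n \<and> b j < 0} \<le> n"
    by (rule card_nonneg_add_card_neg_le[OF R forms])
  have le_neg: "card {i. i < n \<and> a i \<le> 0} + card {j. j < n \<and> 0 < b j} \<le> n"
    using card_nonneg_add_card_neg_le[OF R forms_neg] by simp
  have b_split: "card {j. j < n \<and> 0 < b j} + card {j. j < n \<and> b j < 0} = n"
    by (rule card_pos_add_card_neg[OF b])
  have fin: "finite {i. i < n \<and> P i}" for P by simp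
  have "card {i. i < n \<and> 0 \<le> a i} + card {i. i < n \<and> a i \<le> 0} = n + card {i. i < n \<and> a i = 0}"
  proof -
    have "{i. i < n \<and> 0 \<le> a i} \<union> {i. i < n \<and> a i \<le> 0} = {..<n}"
      "{i. i < n \<and> 0 \<le> a i} \<inter> {i. i < n \<and> a i \<le> 0} = {i. i < n \<and> a i = 0}" by auto
    thus ?thesis using card_Un_Int[OF fin fin] by simp
  qed
  hence "card {i. i < n \<and> a i = 0} = 0" using le le_neg b_split by linarith
  thus a: "\<And>i. i < n \<Longrightarrow> a i \<noteq> 0" by (simp add: card_eq_0_iff)
  have a_split: "card {i. i < n \<and> 0 < a i} + card {i. i < n \<and> a i < 0} = n"
    by (rule card_pos_add_card_neg) (rule a)
  have "{i. i < n \<and> 0 \<le> a i} = {i. i < n \<and> 0 < a i}" "{i. i < n \<and> a i \<le> 0} = {i. i < n \<and> a i < 0}"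
    using a by (auto simp: order.order_iff_strict)
  thus "card {i. i < n \<and> 0 < a i} = card {j. j < n \<and> 0 < b j}"
    and "card {i. i < n \<and> a i < 0} = card {j. j < n \<and> b j < 0}"
    using le le_neg b_split a_split by simp_all
qed

section \<open>Orthogonal diagonalization of real symmetric matrices\<close>

lemma householder_square_index:
  fixes w :: "nat \<Rightarrow> real"
  assumes c: "c = (\<Sum>k<n. w k * w k)" "c \<noteq> 0" and ij: "i < n" "j < n"
  shows "(\<Sum>k<n. ((if i = k then 1 else 0) - 2 * w i * w k / c) * ((if k = j then 1 else 0) - 2 * w k * w j / c))
    = (if i = j then 1 else 0)"
proof -
  have "(\<Sum>k<n. ((if i = k then 1 else 0) - 2 * w i * w k / c) * ((if k = j then 1 else 0) - 2 * w k * w j / c))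
    = (if i = j then 1 else 0) - 4 * w i * w j / c + 4 * w i * w j / (c * c) * (\<Sum>k<n. w k * w k)"
    using ij by (simp add: algebra_simps sum.distrib sum_subtractf sum_distrib_left if_distrib[of "\<lambda>x. x * _"]
        if_distrib[of "\<lambda>x. _ * x"] if_distrib[of "\<lambda>x. x / c"] sum_divide_distrib cong: if_cong)
  also have "\<dots> = (if i = j then 1 else 0)" using c by (simp add: field_simps)
  finally show ?thesis .
qed

lemma householder_reflection:
  fixes u :: "real vec"
  assumes u: "u \<in> carrier_vec n" "u \<bullet> u = 1" and n: "0 < n"
  shows "\<exists>H \<in> carrier_mat n n. transpose_mat H = H \<and> H * H = 1\<^sub>m n \<and> col H 0 = u"
proof -
  define w where "w k = u $ k - (if k = 0 then 1 else 0)" for k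
  define c where "c = (\<Sum>k<n. w k * w k)"
  have "(\<Sum>k<n. u $ k * u $ k) = 1" using u by (simp add: scalar_prod_def lessThan_atLeast0)
  hence c_eq: "c = 2 - 2 * u $ 0"
    using n by (simp add: c_def w_def algebra_simps sum.distrib sum_subtractf if_distrib[of "\<lambda>x. x * _"]
        if_distrib[of "\<lambda>x. _ * x"] cong: if_cong)
  show ?thesis
  proof (cases "c = 0")
    case True
    have "\<forall>k\<in>{..<n}. w k * w k = 0"
      using True unfolding c_def by (subst sum_nonneg_eq_0_iff[symmetric]) auto
    hence "u = unit_vec n 0" using u by (intro eq_vecI) (auto simp: w_def split: if_splits)
    thus ?thesis using n by (intro bexI[of _ "1\<^sub>m n"]) auto
  next
    case False
    define H where "H = mat n n (\<lambda>(i,j). (if i = j then 1 else 0) - 2 * w i * w j / c)"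
    have H: "H \<in> carrier_mat n n" unfolding H_def by simp
    have "transpose_mat H = H" by (rule eq_matI) (auto simp: H_def mult.commute)
    moreover have "H * H = 1\<^sub>m n"
    proof (rule eq_matI)
      fix i j assume "i < dim_row (1\<^sub>m n)" "j < dim_col (1\<^sub>m n)"
      hence ij: "i < n" "j < n" by auto
      have "(H * H) $$ (i,j) = (\<Sum>k<n. ((if i = k then 1 else 0) - 2 * w i * w k / c)
          * ((if k = j then 1 else 0) - 2 * w k * w j / c))"
        using ij by (simp add: H_def scalar_prod_def lessThan_atLeast0)
      thus "(H * H) $$ (i,j) = 1\<^sub>m n $$ (i,j)"
        using ij householder_square_index[OF c_def False ij] by simp
    qed (use H in auto)
    moreover have "col H 0 = u"
    proof (rule eq_vecI)
      fix i assume "i < dim_vec u"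
      hence i: "i < n" using u by simp
      have c: "c = - 2 * w 0" using c_eq by (simp add: w_def)
      hence "w 0 \<noteq> 0" using False by simp
      hence "2 * w i * w 0 / c = - w i" unfolding c by (simp add: field_simps)
      thus "col H 0 $ i = u $ i" using i n by (simp add: H_def w_def)
    qed (use H u in auto)
    ultimately show ?thesis using H by blast
  qed
qed

lemma symmetric_mat_complex_eigenvalue_real:
  fixes A :: "real mat" and c :: complex
  assumes A: "A \<in> carrier_mat n n" "transpose_mat A = A"
    and ev: "eigenvalue (map_mat complex_of_real A) c"
  shows "c \<in> \<real>"
proof -
  let ?Ac = "map_mat complex_of_real A"
  obtain v where v: "v \<in> carrier_vec n" "v \<noteq> 0\<^sub>v n" and Av: "?Ac *\<^sub>v v = c \<cdot>\<^sub>v v"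
    using ev A unfolding eigenvalue_def eigenvector_def by auto
  have sym: "A $$ (j,i) = A $$ (i,j)" if "i < n" "j < n" for i j
    using arg_cong[OF A(2), of "\<lambda>M. M $$ (i,j)"] A(1) that by simp
  \<comment> \<open>The Hermitian form \<open>v\<^sup>* A v\<close> equals both \<open>c |v|\<^sup>2\<close> and its own conjugate.\<close>
  define N where "N = (\<Sum>i<n. cnj (v$i) * v$i)"
  define s where "s = (\<Sum>i<n. cnj (v$i) * (?Ac *\<^sub>v v)$i)"
  have "s = (\<Sum>i<n. cnj (v$i) * (c * v$i))"
    unfolding s_def using Av v by (intro sum.cong) auto
  also have "\<dots> = c * N" unfolding N_def sum_distrib_left by (intro sum.cong) auto
  finally have s_eq: "s = c * N" .
  have Av_index: "(?Ac *\<^sub>v v)$i = (\<Sum>j<n. complex_of_real (A $$ (i,j)) * v$j)" if "i < n" for i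
    using that A v by (simp add: scalar_prod_def lessThan_atLeast0 mult.commute)
  have s_double: "s = (\<Sum>i<n. \<Sum>j<n. cnj (v$i) * complex_of_real (A $$ (i,j)) * v$j)"
    unfolding s_def by (intro sum.cong) (simp_all add: Av_index sum_distrib_left mult.assoc)
  have "cnj s = (\<Sum>i<n. \<Sum>j<n. v$i * complex_of_real (A $$ (i,j)) * cnj (v$j))"
    unfolding s_double cnj_sum by simp
  also have "\<dots> = (\<Sum>j<n. \<Sum>i<n. v$i * complex_of_real (A $$ (i,j)) * cnj (v$j))"
    by (rule sum.swap)
  also have "\<dots> = s"
    unfolding s_double by (intro sum.cong refl) (simp add: sym mult.commute mult.left_commute)
  finally have "cnj s = s" .
  have N_eq: "N = complex_of_real (\<Sum>i<n. (cmod (v$i))^2)"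
    unfolding N_def of_real_sum by (intro sum.cong refl) (metis complex_norm_square mult.commute)
  obtain k where k: "k < n" "v$k \<noteq> 0" using v by (auto simp: vec_eq_iff)
  have "0 < (\<Sum>i<n. (cmod (v$i))^2)" using k by (intro sum_pos2[of _ k]) auto
  hence "N \<noteq> 0" unfolding N_eq of_real_eq_0_iff by linarith
  moreover have "cnj c * N = c * N" using \<open>cnj s = s\<close> s_eq unfolding N_eq by simp
  ultimately have "cnj c = c" by simp
  thus ?thesis using Reals_cnj_iff by blast
qed

lemma char_poly_symmetric_mat_splits:
  fixes A :: "real mat"
  assumes A: "A \<in> carrier_mat n n" "transpose_mat A = A"
  obtains es where "char_poly A = (\<Prod>e\<leftarrow>es. [:-e,1:])" "length es = n"
proof -
  interpret of_real: map_poly_inj_comm_ring_hom "of_real :: real \<Rightarrow> complex" ..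
  let ?Ac = "map_mat complex_of_real A"
  have Ac: "?Ac \<in> carrier_mat n n" using A by simp
  obtain cs where cs: "char_poly ?Ac = (\<Prod>c\<leftarrow>cs. [:-c,1:])" "length cs = n"
    using char_poly_factorized[OF Ac] by blast
  have real: "of_real (Re c) = c" if "c \<in> set cs" for c
  proof -
    have "poly (char_poly ?Ac) c = 0" unfolding cs(1) using that by (rule linear_poly_root)
    hence "eigenvalue ?Ac c" using eigenvalue_root_char_poly[OF Ac] by simp
    thus ?thesis using symmetric_mat_complex_eigenvalue_real[OF A] by (simp add: Reals_def)
  qed
  have "map_poly of_real (\<Prod>e\<leftarrow>map Re cs. [:-e,1:]) = (\<Prod>c\<leftarrow>cs. [:-c,1:])"
    using real by (simp add: of_real.hom_prod_list o_def cong: map_cong)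
  also have "\<dots> = map_poly of_real (char_poly A)"
    using cs(1) of_real_hom.char_poly_hom[OF A(1)] by metis
  finally have "char_poly A = (\<Prod>e\<leftarrow>map Re cs. [:-e,1:])" using of_real.eq_iff by metis
  thus ?thesis using cs(2) by (intro that[of "map Re cs"]) simp_all
qed

lemma unit_eigenvector:
  fixes A :: "real mat"
  assumes A: "A \<in> carrier_mat n n" and ev: "eigenvalue A e"
  obtains u where "u \<in> carrier_vec n" "u \<bullet> u = 1" "A *\<^sub>v u = e \<cdot>\<^sub>v u"
proof -
  obtain v where v: "v \<in> carrier_vec n" "v \<noteq> 0\<^sub>v n" and Av: "A *\<^sub>v v = e \<cdot>\<^sub>v v"
    using ev A unfolding eigenvalue_def eigenvector_def by auto
  obtain k where k: "k < n" "v $ k \<noteq> 0" using v by (auto simp: vec_eq_iff)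
  have "0 < v \<bullet> v"
    using v k by (auto simp: scalar_prod_def lessThan_atLeast0[symmetric] intro!: sum_pos2[of _ k])
  define a where "a = 1 / sqrt (v \<bullet> v)"
  have "(a \<cdot>\<^sub>v v) \<bullet> (a \<cdot>\<^sub>v v) = 1"
    using v \<open>0 < v \<bullet> v\<close> by (simp add: a_def field_simps)
  moreover have "A *\<^sub>v (a \<cdot>\<^sub>v v) = e \<cdot>\<^sub>v (a \<cdot>\<^sub>v v)"
    using A v Av by (simp add: mult_mat_vec smult_smult_assoc mult.commute)
  ultimately show ?thesis using v by (intro that[of "a \<cdot>\<^sub>v v"]) auto
qed

lemma householder_deflation:
  fixes A :: "real mat"
  assumes A: "A \<in> carrier_mat (Suc n) (Suc n)" "transpose_mat A = A" and e: "eigenvalue A e"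
  obtains H B where "H \<in> carrier_mat (Suc n) (Suc n)" "transpose_mat H = H" "H * H = 1\<^sub>m (Suc n)"
    and "B \<in> carrier_mat n n" "transpose_mat B = B"
    and "H * A * H = four_block_mat (mat 1 1 (\<lambda>_. e)) (0\<^sub>m 1 n) (0\<^sub>m n 1) B"
proof -
  obtain u where u: "u \<in> carrier_vec (Suc n)" "u \<bullet> u = 1" "A *\<^sub>v u = e \<cdot>\<^sub>v u"
    using unit_eigenvector[OF A(1) e] by blast
  obtain H where H: "H \<in> carrier_mat (Suc n) (Suc n)" "transpose_mat H = H" "H * H = 1\<^sub>m (Suc n)"
    and Hu: "col H 0 = u"
    using householder_reflection[OF u(1,2)] by blast
  define A' where "A' = H * A * H"
  have A': "A' \<in> carrier_mat (Suc n) (Suc n)" using A H by (simp add: A'_def)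
  have "transpose_mat A' = transpose_mat H * transpose_mat (H * A)"
    unfolding A'_def using A H by (intro transpose_mult) auto
  also have "\<dots> = A'"
    unfolding A'_def using A H by (simp add: transpose_mult[of H "Suc n" "Suc n"])
  finally have "transpose_mat A' = A'" .
  hence sym: "A' $$ (j,i) = A' $$ (i,j)" if "i < Suc n" "j < Suc n" for i j
    using arg_cong[of _ _ "\<lambda>M. M $$ (i,j)"] A' that by (metis index_transpose_mat(1) carrier_matD)
  have "col A' 0 = (H * A) *\<^sub>v col H 0"
    unfolding A'_def using A H by (intro col_mult2) auto
  also have "\<dots> = e \<cdot>\<^sub>v (H *\<^sub>v col H 0)"
    using A H u Hu by (simp add: mult_mat_vec)
  also have "H *\<^sub>v col H 0 = col (H * H) 0"
    using col_mult2[OF H(1) H(1), of 0] by simp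
  finally have col_A': "col A' 0 = e \<cdot>\<^sub>v unit_vec (Suc n) 0" using H by simp
  have col0: "A' $$ (i,0) = (if i = 0 then e else 0)" if "i < Suc n" for i
    using arg_cong[OF col_A', of "\<lambda>v. v $ i"] A' that by simp
  define B where "B = mat n n (\<lambda>(i,j). A' $$ (Suc i, Suc j))"
  have "A' = four_block_mat (mat 1 1 (\<lambda>_. e)) (0\<^sub>m 1 n) (0\<^sub>m n 1) B"
  proof (rule eq_matI)
    fix i j assume "i < dim_row (four_block_mat (mat 1 1 (\<lambda>_. e)) (0\<^sub>m 1 n) (0\<^sub>m n 1) B)"
      "j < dim_col (four_block_mat (mat 1 1 (\<lambda>_. e)) (0\<^sub>m 1 n) (0\<^sub>m n 1) B)"
    hence ij: "i < Suc n" "j < Suc n" by (simp_all add: B_def)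
    show "A' $$ (i,j) = four_block_mat (mat 1 1 (\<lambda>_. e)) (0\<^sub>m 1 n) (0\<^sub>m n 1) B $$ (i,j)"
      using col0[OF ij(1)] col0[OF ij(2)] sym[OF ij] ij by (cases i; cases j) (auto simp: B_def)
  qed (use A' in \<open>simp_all add: B_def\<close>)
  moreover have "transpose_mat B = B"
    using sym by (intro eq_matI) (auto simp: B_def)
  ultimately show ?thesis using H unfolding A'_def by (intro that[of H B]) (simp_all add: B_def)
qed

lemma congruence_four_block_diag:
  fixes M C Q :: "'a :: comm_ring_1 mat"
  assumes M: "M \<in> carrier_mat k k" and C: "C \<in> carrier_mat l l" and Q: "Q \<in> carrier_mat l l"
  shows "transpose_mat (four_block_mat (1\<^sub>m k) (0\<^sub>m k l) (0\<^sub>m l k) Q)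
      * four_block_mat M (0\<^sub>m k l) (0\<^sub>m l k) C * four_block_mat (1\<^sub>m k) (0\<^sub>m k l) (0\<^sub>m l k) Q
    = four_block_mat M (0\<^sub>m k l) (0\<^sub>m l k) (transpose_mat Q * C * Q)"
proof -
  let ?blk = "\<lambda>X Y. four_block_mat X (0\<^sub>m k l) (0\<^sub>m l k) Y"
  have QT: "transpose_mat Q \<in> carrier_mat l l" using Q by simp
  have "transpose_mat (?blk (1\<^sub>m k) Q) = ?blk (1\<^sub>m k) (transpose_mat Q)"
    using Q by (subst transpose_four_block_mat[of _ k k _ l _ l]) auto
  moreover have "?blk (1\<^sub>m k) (transpose_mat Q) * ?blk M C = ?blk M (transpose_mat Q * C)"
    using M C QT by (subst mult_four_block_mat[OF one_carrier_mat zero_carrier_mat zero_carrier_mat QT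
          M zero_carrier_mat zero_carrier_mat C]) auto
  moreover have "?blk M (transpose_mat Q * C) * ?blk (1\<^sub>m k) Q = ?blk M (transpose_mat Q * C * Q)"
    using M C QT Q by (subst mult_four_block_mat[OF M zero_carrier_mat zero_carrier_mat
          mult_carrier_mat[OF QT C] one_carrier_mat zero_carrier_mat zero_carrier_mat Q]) auto
  ultimately show ?thesis by simp
qed

lemma transpose_mult_congruence:
  fixes H Q X :: "'a :: comm_ring_1 mat"
  assumes "H \<in> carrier_mat n n" "Q \<in> carrier_mat n n" "X \<in> carrier_mat n n"
  shows "transpose_mat (H * Q) * X * (H * Q) = transpose_mat Q * (transpose_mat H * X * H) * Q"
proof -
  have "transpose_mat (H * Q) = transpose_mat Q * transpose_mat H" using assms by (intro transpose_mult) auto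
  thus ?thesis using assms by (simp add: assoc_mult_mat[of _ n n _ n _ n])
qed

lemma four_block_mat_diag_Cons:
  "four_block_mat (mat 1 1 (\<lambda>_. e)) (0\<^sub>m 1 n) (0\<^sub>m n 1) (mat_diag n (\<lambda>i. es ! i))
    = mat_diag (Suc n) (\<lambda>i. (e # es) ! i)"
  by (rule eq_matI) (auto simp: mat_diag_def nth_Cons')

lemma char_poly_deflated:
  fixes A :: "'a :: field mat"
  assumes A: "A \<in> carrier_mat n n" and H: "H \<in> carrier_mat n n" "H * H = 1\<^sub>m n"
    and B: "B \<in> carrier_mat k k" and HAH: "H * A * H = four_block_mat (mat 1 1 (\<lambda>_. e)) (0\<^sub>m 1 k) (0\<^sub>m k 1) B"
  shows "char_poly A = [:-e,1:] * char_poly B"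
proof -
  have "similar_mat (H * A * H) A"
    unfolding similar_mat_def similar_mat_wit_def using A H by (intro exI[of _ H]) (auto simp: Let_def)
  hence "char_poly A = char_poly (H * A * H)" by (rule char_poly_similar[symmetric])
  also have "\<dots> = char_poly (mat 1 1 (\<lambda>_. e)) * char_poly B"
    unfolding HAH by (rule char_poly_four_block_zeros_col) (use B in auto)
  also have "char_poly (mat 1 1 (\<lambda>_. e)) = [:-e,1:]" by (simp add: char_poly_defs det_def sign_def)
  finally show ?thesis .
qed

lemma orthogonal_diagonalization:
  fixes A :: "real mat"
  assumes "A \<in> carrier_mat n n" "transpose_mat A = A" "char_poly A = (\<Prod>e\<leftarrow>es. [:-e,1:])"
  shows "\<exists>P \<in> carrier_mat n n. transpose_mat P * P = 1\<^sub>m n \<and> transpose_mat P * A * P = mat_diag n (\<lambda>i. es ! i)"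
  using assms
proof (induction es arbitrary: n A)
  case Nil
  hence "n = 0" using degree_monic_char_poly[OF Nil.prems(1)] by simp
  thus ?case using Nil.prems(1) by (intro bexI[of _ "1\<^sub>m n"]) (auto simp: mat_diag_def intro!: eq_matI)
next
  case (Cons e es n A)
  note A = Cons.prems(1,2)
  have "n = Suc (length es)"
    using degree_monic_char_poly[OF A(1)] Cons.prems(3) degree_linear_factors[of uminus "e # es"] by simp
  then obtain k where n: "n = Suc k" by blast
  have ev: "eigenvalue A e"
    unfolding eigenvalue_root_char_poly[OF A(1)] Cons.prems(3) by (rule linear_poly_root) simp
  have A_Suc: "A \<in> carrier_mat (Suc k) (Suc k)" using A(1) n by simp
  obtain H B where H: "H \<in> carrier_mat n n" "transpose_mat H = H" "H * H = 1\<^sub>m n"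
    and B: "B \<in> carrier_mat k k" "transpose_mat B = B"
    and HAH: "H * A * H = four_block_mat (mat 1 1 (\<lambda>_. e)) (0\<^sub>m 1 k) (0\<^sub>m k 1) B"
    unfolding n by (rule householder_deflation[OF A_Suc A(2) ev])
  have "[:-e,1:] * char_poly B = [:-e,1:] * (\<Prod>e\<leftarrow>es. [:-e,1:])"
    using char_poly_deflated[OF A(1) H(1,3) B(1) HAH] Cons.prems(3) by simp
  hence "char_poly B = (\<Prod>e\<leftarrow>es. [:-e,1:])" by (metis mult_cancel_left pCons_eq_0_iff zero_neq_one)
  then obtain Q where Q: "Q \<in> carrier_mat k k" "transpose_mat Q * Q = 1\<^sub>m k"
    and QBQ: "transpose_mat Q * B * Q = mat_diag k (\<lambda>i. es ! i)"
    using Cons.IH B by blast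
  define Q' where "Q' = four_block_mat (1\<^sub>m 1) (0\<^sub>m 1 k) (0\<^sub>m k 1) Q"
  have Q': "Q' \<in> carrier_mat n n"
    using four_block_carrier_mat[OF one_carrier_mat[of 1] Q(1), of "0\<^sub>m 1 k" "0\<^sub>m k 1"] by (simp add: Q'_def n)
  have congr: "transpose_mat (H * Q') * X * (H * Q') = transpose_mat Q' * (H * X * H) * Q'"
    if "X \<in> carrier_mat n n" for X
    using transpose_mult_congruence[OF H(1) Q' that] H(2) by simp
  have "transpose_mat (H * Q') * (H * Q') = transpose_mat (H * Q') * 1\<^sub>m n * (H * Q')"
    using H Q' by simp
  also have "\<dots> = transpose_mat Q' * (H * 1\<^sub>m n * H) * Q'" by (rule congr) simp
  also have "H * 1\<^sub>m n * H = four_block_mat (1\<^sub>m 1) (0\<^sub>m 1 k) (0\<^sub>m k 1) (1\<^sub>m k)"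
    using H by (simp add: n)
  also have "transpose_mat Q' * \<dots> * Q' = 1\<^sub>m n"
    using Q congruence_four_block_diag[of "1\<^sub>m 1" 1 "1\<^sub>m k" k Q] by (simp add: Q'_def n)
  finally have orth: "transpose_mat (H * Q') * (H * Q') = 1\<^sub>m n" .
  have "transpose_mat (H * Q') * A * (H * Q') = transpose_mat Q' * (H * A * H) * Q'"
    by (rule congr) (rule A(1))
  also have "\<dots> = four_block_mat (mat 1 1 (\<lambda>_. e)) (0\<^sub>m 1 k) (0\<^sub>m k 1) (transpose_mat Q * B * Q)"
    unfolding HAH Q'_def by (rule congruence_four_block_diag) (use B Q in auto)
  also have "\<dots> = mat_diag n (\<lambda>i. (e # es) ! i)"
    unfolding QBQ n by (rule four_block_mat_diag_Cons)
  finally show ?case using orth H Q' by (intro bexI[of _ "H * Q'"]) auto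
qed

section \<open>Inertia of a matrix congruent to a diagonal one\<close>

lemma order_prod_linear_factors: "order x (\<Prod>e\<leftarrow>es. [:-e,1:]) = count_list es (x :: 'a :: idom)"
proof (induction es)
  case (Cons e es)
  have "(\<Prod>e\<leftarrow>es. [:-e,1:]) \<noteq> (0 :: 'a poly)" by (auto simp: prod_list_zero_iff)
  hence "[:-e,1:] * (\<Prod>e\<leftarrow>es. [:-e,1:]) \<noteq> 0" by (metis mult_eq_0_iff pCons_eq_0_iff one_neq_zero)
  hence "order x ([:-e,1:] * (\<Prod>e\<leftarrow>es. [:-e,1:])) = order x [:-e,1:] + order x (\<Prod>e\<leftarrow>es. [:-e,1:])"
    by (rule order_mult)
  thus ?case using Cons by (simp add: order_linear')
qed (simp add: order_0I)

lemma poly_prod_linear_factors_eq_0_iff: "poly (\<Prod>e\<leftarrow>es. [:-e,1:]) x = 0 \<longleftrightarrow> (x :: 'a :: idom) \<in> set es"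
  by (induction es) auto

lemma sum_count_list_filter: "(\<Sum>x\<in>{x \<in> set xs. P x}. count_list xs x) = length (filter P xs)"
proof -
  have "count_list (filter P xs) x = count_list xs x" if "P x" for x
    using that by (induction xs) auto
  hence "(\<Sum>x\<in>{x \<in> set xs. P x}. count_list xs x) = (\<Sum>x\<in>set (filter P xs). count_list (filter P xs) x)"
    by (intro sum.cong) auto
  thus ?thesis by (simp add: sum_count_set)
qed

lemma inertia_char_poly_prod_linear_factors:
  assumes "char_poly M = (\<Prod>e\<leftarrow>es. [:-e,1:])"
  shows "pos_inertia M = card {i. i < length es \<and> 0 < es ! i}"
    and "neg_inertia M = card {i. i < length es \<and> es ! i < 0}"
  unfolding pos_inertia_def neg_inertia_def assms poly_prod_linear_factors_eq_0_iff order_prod_linear_factors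
  by (simp_all add: sum_count_list_filter length_filter_conv_card)

lemma mat_diag_mult_vec_index:
  assumes "u \<in> carrier_vec n" "i < n"
  shows "(mat_diag n a *\<^sub>v u) $ i = a i * u $ i"
  using assms by (simp add: mat_diag_def scalar_prod_def if_distrib[of "\<lambda>x. x * _"] cong: if_cong)

lemma quadratic_form_mat_diag:
  fixes a :: "nat \<Rightarrow> real"
  assumes u: "u \<in> carrier_vec n"
  shows "u \<bullet> (mat_diag n a *\<^sub>v u) = (\<Sum>i<n. a i * (u$i)^2)"
proof -
  have "u \<bullet> (mat_diag n a *\<^sub>v u) = (\<Sum>i<n. u$i * (mat_diag n a *\<^sub>v u)$i)"
    using u by (simp add: scalar_prod_def lessThan_atLeast0 mat_diag_def)
  also have "\<dots> = (\<Sum>i<n. a i * (u$i)^2)"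
    using u by (intro sum.cong) (simp_all add: mat_diag_mult_vec_index power2_eq_square)
  finally show ?thesis .
qed

lemma quadratic_form_congruence:
  fixes B R :: "'a :: comm_ring mat"
  assumes R: "R \<in> carrier_mat n n" and B: "B \<in> carrier_mat n n" and u: "u \<in> carrier_vec n"
  shows "u \<bullet> ((transpose_mat R * B * R) *\<^sub>v u) = (R *\<^sub>v u) \<bullet> (B *\<^sub>v (R *\<^sub>v u))"
proof -
  have BRu: "B *\<^sub>v (R *\<^sub>v u) \<in> carrier_vec n" using B R u by simp
  have "(transpose_mat R * B * R) *\<^sub>v u = transpose_mat R *\<^sub>v (B *\<^sub>v (R *\<^sub>v u))"
    using R B u by (simp add: assoc_mult_mat_vec[of _ n n _ n])
  hence "u \<bullet> ((transpose_mat R * B * R) *\<^sub>v u) = (transpose_mat R *\<^sub>v (B *\<^sub>v (R *\<^sub>v u))) \<bullet> u"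
    using R BRu u by (simp add: comm_scalar_prod[of u n])
  also have "\<dots> = (B *\<^sub>v (R *\<^sub>v u)) \<bullet> (R *\<^sub>v u)" by (rule transpose_vec_mult_scalar[OF R u BRu])
  also have "\<dots> = (R *\<^sub>v u) \<bullet> (B *\<^sub>v (R *\<^sub>v u))" using R u BRu by (simp add: comm_scalar_prod[of _ n])
  finally show ?thesis .
qed

lemma det_mat_diag: "det (mat_diag n a) = (\<Prod>i<n. a i)"
proof -
  have "det (mat_diag n a) = prod_list (diag_mat (mat_diag n a))"
    by (rule det_upper_triangular) (auto simp: mat_diag_def upper_triangular_def)
  also have "diag_mat (mat_diag n a) = map a [0..<n]"
    by (rule nth_equalityI) (auto simp: diag_mat_def mat_diag_def)
  finally show ?thesis by (simp add: prod.distinct_set_conv_list[symmetric] atLeast0LessThan)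
qed

lemma invertible_mat_if_det_nonzero:
  fixes A :: "'a :: field mat"
  assumes A: "A \<in> carrier_mat n n" and "det A \<noteq> 0"
  shows "invertible_mat A"
proof -
  from det_non_zero_imp_unit[OF assms] obtain B where "B \<in> carrier_mat n n" "A * B = 1\<^sub>m n" "B * A = 1\<^sub>m n"
    unfolding Units_def ring_mat_def by auto
  thus ?thesis using A unfolding invertible_mat_def inverts_mat_def by auto
qed

lemma transpose_congruence_mat_diag:
  fixes R :: "'a :: comm_ring_1 mat"
  assumes R: "R \<in> carrier_mat n n"
  shows "transpose_mat (transpose_mat R * mat_diag n b * R) = transpose_mat R * mat_diag n b * R"
proof -
  have "transpose_mat (mat_diag n b) = mat_diag n b" by (rule eq_matI) (auto simp: mat_diag_def)
  moreover have "transpose_mat (transpose_mat R * mat_diag n b * R)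
      = transpose_mat R * transpose_mat (transpose_mat R * mat_diag n b)"
    using R by (intro transpose_mult[of _ n n]) auto
  ultimately show ?thesis
    using R by (simp add: transpose_mult[of "transpose_mat R" n n "mat_diag n b" n] assoc_mult_mat[of _ n n _ n _ n])
qed

lemma diagonal_forms_congruent:
  fixes R :: "real mat"
  assumes R: "R \<in> carrier_mat n n" and congr: "mat_diag n a = transpose_mat R * mat_diag n b * R"
    and u: "u \<in> carrier_vec n"
  shows "(\<Sum>i<n. a i * (u$i)^2) = (\<Sum>j<n. b j * ((R *\<^sub>v u)$j)^2)"
  using quadratic_form_mat_diag[OF u, of a] quadratic_form_congruence[OF R _ u, of "mat_diag n b"]
    quadratic_form_mat_diag[of "R *\<^sub>v u" n b] R u by (simp add: congr)

theorem sylvester_law_of_inertia: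
  fixes R :: "real mat" and b :: "nat \<Rightarrow> real"
  assumes R: "R \<in> carrier_mat n n" "det R \<noteq> 0" and b: "\<And>j. j < n \<Longrightarrow> b j \<noteq> 0"
    and A: "A = transpose_mat R * mat_diag n b * R"
  shows "invertible_mat A"
    and "pos_inertia A = card {j. j < n \<and> 0 < b j}"
    and "neg_inertia A = card {j. j < n \<and> b j < 0}"
proof -
  have A_carrier: "A \<in> carrier_mat n n" unfolding A using R by (intro mult_carrier_mat) auto
  have "transpose_mat A = A" unfolding A by (rule transpose_congruence_mat_diag[OF R(1)])
  then obtain es where es: "char_poly A = (\<Prod>e\<leftarrow>es. [:-e,1:])" "length es = n"
    using char_poly_symmetric_mat_splits A_carrier by blast
  then obtain P where P: "P \<in> carrier_mat n n" "transpose_mat P * P = 1\<^sub>m n"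
    and PAP: "transpose_mat P * A * P = mat_diag n (\<lambda>i. es ! i)"
    using orthogonal_diagonalization[OF A_carrier \<open>transpose_mat A = A\<close>] by blast
  have RP: "R * P \<in> carrier_mat n n" using R P by simp
  have "det (transpose_mat P) * det P = 1"
    using P det_mult[of "transpose_mat P" n P] by simp
  hence det_RP: "det (R * P) \<noteq> 0" using R P by (auto simp: det_mult[of _ n])
  have "mat_diag n (\<lambda>i. es ! i) = transpose_mat (R * P) * mat_diag n b * (R * P)"
    using R P by (simp add: PAP[symmetric] A transpose_mult_congruence)
  note forms = diagonal_forms_congruent[OF RP this]
  have "card {i. i < n \<and> 0 < es ! i} = card {j. j < n \<and> 0 < b j}"
    and "card {i. i < n \<and> es ! i < 0} = card {j. j < n \<and> b j < 0}"
    using sylvester_diagonal_forms(2,3)[OF RP det_RP forms b] by auto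
  thus "pos_inertia A = card {j. j < n \<and> 0 < b j}" "neg_inertia A = card {j. j < n \<and> b j < 0}"
    using inertia_char_poly_prod_linear_factors[OF es(1)] es(2) by simp_all
  have "det A = det R * (\<Prod>j<n. b j) * det R"
    using R by (simp add: A det_mult[of _ n] det_transpose det_mat_diag)
  hence "det A \<noteq> 0" using R b by simp
  thus "invertible_mat A" by (rule invertible_mat_if_det_nonzero[OF A_carrier])
qed

section \<open>LCM matrices of sets of squarefree numbers\<close>

lemma bij_betw_nth_filter:
  assumes "distinct xs"
  shows "bij_betw ((!) xs) {k \<in> {..<length xs}. P (xs ! k)} {x \<in> set xs. P x}"
  using assms by (auto simp: bij_betw_def inj_on_def nth_eq_iff_index_eq in_set_conv_nth)

definition divisibility_mat :: "nat list \<Rightarrow> real mat" where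
  "divisibility_mat xs = mat (length xs) (length xs) (\<lambda>(k,i). if xs ! k dvd xs ! i then real (xs ! i) else 0)"

lemma det_divisibility_mat_nonzero:
  assumes sorted: "sorted_wrt (<) xs" and pos: "0 \<notin> set xs"
  shows "det (divisibility_mat xs) \<noteq> 0"
proof -
  let ?R = "divisibility_mat xs"
  have R: "?R \<in> carrier_mat (length xs) (length xs)" by (simp add: divisibility_mat_def)
  have "upper_triangular ?R"
  proof (intro upper_triangularI)
    fix k i assume "i < k" "k < dim_row ?R"
    hence ik: "i < k" "k < length xs" by (simp_all add: divisibility_mat_def)
    have "0 < xs ! i" using pos nth_mem[of i xs] ik by (metis gr0I order.strict_trans)
    moreover have "xs ! i < xs ! k" using sorted ik by (simp add: sorted_wrt_nth_less)
    ultimately have "\<not> xs ! k dvd xs ! i" by (auto dest: dvd_imp_le)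
    thus "?R $$ (k,i) = 0" using ik by (simp add: divisibility_mat_def)
  qed
  hence "det ?R = prod_list (diag_mat ?R)" using R by (rule det_upper_triangular)
  thus ?thesis
    using pos nth_mem by (fastforce simp: prod_list_zero_iff diag_mat_def divisibility_mat_def)
qed

lemma lcm_matrix_eq_congruence:
  fixes h :: "nat \<Rightarrow> real"
  assumes S: "finite S" and xs: "xs = sorted_list_of_set S"
    and lcm_eq: "\<And>s t. s \<in> S \<Longrightarrow> t \<in> S \<Longrightarrow>
      real (lcm s t) = real s * real t * (\<Sum>d \<in> {d \<in> S. d dvd s \<and> d dvd t}. h d)"
  shows "lcm_matrix S = transpose_mat (divisibility_mat xs) * mat_diag (length xs) (\<lambda>k. h (xs ! k)) * divisibility_mat xs"
    (is "_ = transpose_mat ?R * ?D * ?R")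
proof (rule eq_matI)
  let ?n = "length xs"
  have R: "?R \<in> carrier_mat ?n ?n" by (simp add: divisibility_mat_def)
  have set_xs: "set xs = S" "distinct xs" using S by (simp_all add: xs)
  fix i j assume "i < dim_row (transpose_mat ?R * ?D * ?R)" "j < dim_col (transpose_mat ?R * ?D * ?R)"
  hence ij: "i < ?n" "j < ?n" using R by auto
  have "(transpose_mat ?R * ?D * ?R) $$ (i,j) = (\<Sum>k<?n. ?R $$ (k,i) * (h (xs ! k) * ?R $$ (k,j)))"
    using ij R by (simp add: assoc_mult_mat[OF transpose_carrier_mat[THEN iffD2, OF R] mat_diag_dim R]
        mat_diag_mult_left[OF R] scalar_prod_def lessThan_atLeast0)
  also have "\<dots> = (\<Sum>k\<in>{k \<in> {..<?n}. xs ! k dvd xs ! i \<and> xs ! k dvd xs ! j}.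
      real (xs ! i) * real (xs ! j) * h (xs ! k))"
    using ij unfolding sum.inter_filter[OF finite_lessThan] by (intro sum.cong) (auto simp: divisibility_mat_def)
  also have "\<dots> = (\<Sum>d\<in>{d \<in> set xs. d dvd xs ! i \<and> d dvd xs ! j}. real (xs ! i) * real (xs ! j) * h d)"
    by (rule sum.reindex_bij_betw[OF bij_betw_nth_filter[OF set_xs(2)]])
  also have "\<dots> = real (lcm (xs ! i) (xs ! j))"
    using ij set_xs nth_mem[of i xs] nth_mem[of j xs] lcm_eq[of "xs ! i" "xs ! j"]
    by (simp add: sum_distrib_left)
  finally show "lcm_matrix S $$ (i,j) = (transpose_mat ?R * ?D * ?R) $$ (i,j)"
    using ij by (simp add: lcm_matrix_def xs[symmetric])
qed (simp_all add: lcm_matrix_def xs[symmetric] divisibility_mat_def)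

lemma lcm_matrix_inertia_from_divisor_sum:
  fixes S :: "nat set" and h :: "nat \<Rightarrow> real"
  assumes S: "finite S" "0 \<notin> S" and h: "\<And>d. d \<in> S \<Longrightarrow> h d \<noteq> 0"
    and lcm_eq: "\<And>s t. s \<in> S \<Longrightarrow> t \<in> S \<Longrightarrow>
      real (lcm s t) = real s * real t * (\<Sum>d \<in> {d \<in> S. d dvd s \<and> d dvd t}. h d)"
  shows "invertible_mat (lcm_matrix S)"
    and "pos_inertia (lcm_matrix S) = card {d \<in> S. 0 < h d}"
    and "neg_inertia (lcm_matrix S) = card {d \<in> S. h d < 0}"
proof -
  define xs where "xs = sorted_list_of_set S"
  have xs: "distinct xs" "set xs = S" "sorted_wrt (<) xs" using S(1) by (simp_all add: xs_def)
  have R: "divisibility_mat xs \<in> carrier_mat (length xs) (length xs)" by (simp add: divisibility_mat_def)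
  have "det (divisibility_mat xs) \<noteq> 0" using xs S(2) by (intro det_divisibility_mat_nonzero) auto
  moreover have "h (xs ! k) \<noteq> 0" if "k < length xs" for k using h xs(2) nth_mem that by metis
  moreover have "card {k \<in> {..<length xs}. P (h (xs ! k))} = card {d \<in> S. P (h d)}" for P
    using bij_betw_same_card[OF bij_betw_nth_filter[OF xs(1)]] xs(2) by simp
  ultimately show "invertible_mat (lcm_matrix S)"
    and "pos_inertia (lcm_matrix S) = card {d \<in> S. 0 < h d}"
    and "neg_inertia (lcm_matrix S) = card {d \<in> S. h d < 0}"
    using sylvester_law_of_inertia[OF R _ _ lcm_matrix_eq_congruence[OF S(1) xs_def lcm_eq]] by simp_all
qed

locale distinct_primes =
  fixes p :: "'a \<Rightarrow> nat" and I :: "'a set"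
  assumes finite_I: "finite I" and prime_p: "\<And>i. i \<in> I \<Longrightarrow> prime (p i)" and inj_p: "inj_on p I"
begin

definition prod_p :: "'a set \<Rightarrow> nat" where
  "prod_p A = (\<Prod>i\<in>A. p i)"

text \<open>On squarefree \<open>d\<close> this is the Dirichlet convolution \<open>\<mu> * (1/n)\<close>, so that
  \<open>1 / gcd s t\<close> is the sum of \<open>weight d\<close> over the common divisors \<open>d\<close>.\<close>
definition weight :: "nat \<Rightarrow> real" where
  "weight d = (\<Prod>i \<in> {i \<in> I. p i dvd d}. 1 / real (p i) - 1)"

lemma prod_p_image_doubletons:
  assumes "\<And>i j. P i j \<Longrightarrow> i \<noteq> j"
  shows "prod_p ` {{i, j} | i j. P i j} = {p i * p j | i j. P i j}"
proof (intro equalityI subsetI)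
  fix x assume "x \<in> prod_p ` {{i, j} | i j. P i j}"
  then obtain i j where "x = prod_p {i, j}" "P i j" by blast
  thus "x \<in> {p i * p j | i j. P i j}" using assms by (auto simp: prod_p_def)
next
  fix x assume "x \<in> {p i * p j | i j. P i j}"
  then obtain i j where "x = p i * p j" "P i j" by blast
  moreover from this have "x = prod_p {i, j}" using assms by (simp add: prod_p_def)
  ultimately show "x \<in> prod_p ` {{i, j} | i j. P i j}" by blast
qed

lemma prod_p_pos: "A \<subseteq> I \<Longrightarrow> 0 < prod_p A"
  unfolding prod_p_def using prime_p by (intro prod_pos) (auto simp: prime_gt_0_nat)

lemma prime_dvd_prod_p_iff:
  assumes "i \<in> I" "A \<subseteq> I"
  shows "p i dvd prod_p A \<longleftrightarrow> i \<in> A"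
proof
  assume "p i dvd prod_p A"
  then obtain j where "j \<in> A" "p i dvd p j"
    using assms prime_p finite_subset[OF _ finite_I] by (auto simp: prod_p_def prime_dvd_prod_iff)
  hence "p i = p j" using assms prime_p by (auto simp: primes_dvd_imp_eq)
  thus "i \<in> A" using \<open>j \<in> A\<close> assms inj_p by (auto dest: inj_onD)
qed (use assms finite_subset[OF _ finite_I] in \<open>auto simp: prod_p_def dvd_prodI\<close>)

lemma prod_p_dvd_iff:
  assumes "A \<subseteq> I" "B \<subseteq> I"
  shows "prod_p A dvd prod_p B \<longleftrightarrow> A \<subseteq> B"
proof
  assume "prod_p A dvd prod_p B"
  thus "A \<subseteq> B"
    using assms prime_dvd_prod_p_iff by (meson dvd_trans subset_iff)
qed (use assms finite_subset[OF _ finite_I] in \<open>auto simp: prod_p_def prod_dvd_prod_subset\<close>)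

lemma inj_on_prod_p: "inj_on prod_p (Pow I)"
  by (intro inj_onI) (metis PowD dvd_refl prod_p_dvd_iff subset_antisym)

lemma weight_prod_p: "A \<subseteq> I \<Longrightarrow> weight (prod_p A) = (\<Prod>i\<in>A. 1 / real (p i) - 1)"
  unfolding weight_def using prime_dvd_prod_p_iff
  by (intro prod.cong) auto

lemma weight_prod_p_sign:
  assumes "A \<subseteq> I"
  shows "sgn (weight (prod_p A)) = (-1) ^ card A"
proof -
  have "1 / real (p i) < 1" if "i \<in> A" for i
    using prime_p[of i] prime_ge_2_nat[of "p i"] that assms by auto
  hence pos: "0 < (\<Prod>i\<in>A. 1 - 1 / real (p i))" by (intro prod_pos) auto
  have "weight (prod_p A) = (-1) ^ card A * (\<Prod>i\<in>A. 1 - 1 / real (p i))"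
    using assms prod_uminus[of "\<lambda>i. 1 - 1 / real (p i)" A] by (simp add: weight_prod_p)
  thus ?thesis using pos by (cases "even (card A)") (simp_all add: sgn_mult)
qed

lemma gcd_prod_p:
  assumes "A \<subseteq> I" "B \<subseteq> I"
  shows "gcd (prod_p A) (prod_p B) = prod_p (A \<inter> B)"
proof -
  have fin: "finite A" "finite B" using assms finite_subset[OF _ finite_I] by auto
  have split: "prod_p A = prod_p (A \<inter> B) * prod_p (A - B)" "prod_p B = prod_p (A \<inter> B) * prod_p (B - A)"
    using prod.union_disjoint[of "A \<inter> B" "A - B" p] prod.union_disjoint[of "A \<inter> B" "B - A" p] fin
      Int_Diff_Un[of A B] Un_Diff_Int[of B A]
    by (auto simp: prod_p_def Int_commute Un_commute)
  have "coprime (prod_p (A - B)) (prod_p (B - A))"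
    unfolding prod_p_def
  proof (intro prod_coprime_left prod_coprime_right)
    fix i j assume "i \<in> A - B" "j \<in> B - A"
    hence "p i \<noteq> p j" using assms inj_p by (auto dest: inj_onD)
    thus "coprime (p i) (p j)" using \<open>i \<in> A - B\<close> \<open>j \<in> B - A\<close> assms prime_p by (intro primes_coprime) auto
  qed
  thus ?thesis unfolding split by (simp add: gcd_mult_distrib_nat[symmetric])
qed

lemma sum_weight_Pow:
  assumes "K \<subseteq> I"
  shows "(\<Sum>C\<in>Pow K. weight (prod_p C)) = 1 / real (prod_p K)"
proof -
  have "(\<Sum>C\<in>Pow K. weight (prod_p C)) = (\<Sum>C\<in>Pow K. \<Prod>i\<in>C. 1 / real (p i) - 1)"
    using assms by (intro sum.cong) (auto simp: weight_prod_p)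
  also have "\<dots> = (\<Prod>i\<in>K. (1 / real (p i) - 1) + 1)"
    using prod_add[of K "\<lambda>i. 1 / real (p i) - 1" "\<lambda>_. 1"] finite_subset[OF assms finite_I] by simp
  also have "\<dots> = 1 / real (prod_p K)" by (simp add: prod_p_def prod_dividef)
  finally show ?thesis .
qed

lemma lcm_prod_p:
  assumes "A \<subseteq> I" "B \<subseteq> I"
  shows "real (lcm (prod_p A) (prod_p B)) = real (prod_p A) * real (prod_p B) * (\<Sum>C\<in>Pow (A \<inter> B). weight (prod_p C))"
proof -
  have "real (prod_p A * prod_p B) = real (prod_p (A \<inter> B)) * real (lcm (prod_p A) (prod_p B))"
    using prod_gcd_lcm_nat[of "prod_p A" "prod_p B"] gcd_prod_p[OF assms] by (metis of_nat_mult)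
  moreover have "A \<inter> B \<subseteq> I" using assms by auto
  ultimately show ?thesis unfolding sum_weight_Pow[OF \<open>A \<inter> B \<subseteq> I\<close>]
    using prod_p_pos by (simp add: field_simps)
qed

lemma common_divisors_prod_p:
  assumes T: "T \<subseteq> Pow I" and down_closed: "\<And>A C. A \<in> T \<Longrightarrow> C \<subseteq> A \<Longrightarrow> C \<in> T"
    and AB: "A \<in> T" "B \<in> T"
  shows "{d \<in> prod_p ` T. d dvd prod_p A \<and> d dvd prod_p B} = prod_p ` Pow (A \<inter> B)"
proof (intro equalityI subsetI)
  have AB_I: "A \<subseteq> I" "B \<subseteq> I" using AB T by auto
  {
    fix d assume "d \<in> {d \<in> prod_p ` T. d dvd prod_p A \<and> d dvd prod_p B}"
    then obtain C where C: "C \<in> T" "d = prod_p C" "prod_p C dvd prod_p A" "prod_p C dvd prod_p B" by auto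
    have "C \<subseteq> I" using C(1) T by auto
    hence "C \<subseteq> A \<inter> B" using C(3,4) prod_p_dvd_iff[OF _ AB_I(1)] prod_p_dvd_iff[OF _ AB_I(2)] by simp
    thus "d \<in> prod_p ` Pow (A \<inter> B)" using C(2) by simp
  next
    fix d assume "d \<in> prod_p ` Pow (A \<inter> B)"
    then obtain C where C: "C \<subseteq> A \<inter> B" "d = prod_p C" by auto
    hence "C \<in> T" "C \<subseteq> I" using down_closed AB AB_I by auto
    thus "d \<in> {d \<in> prod_p ` T. d dvd prod_p A \<and> d dvd prod_p B}"
      using C prod_p_dvd_iff[OF _ AB_I(1)] prod_p_dvd_iff[OF _ AB_I(2)] by simp
  }
qed

lemma lcm_eq_sum_weight_common_divisors:
  assumes T: "T \<subseteq> Pow I" and down_closed: "\<And>A C. A \<in> T \<Longrightarrow> C \<subseteq> A \<Longrightarrow> C \<in> T"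
    and st: "s \<in> prod_p ` T" "t \<in> prod_p ` T"
  shows "real (lcm s t) = real s * real t * (\<Sum>d \<in> {d \<in> prod_p ` T. d dvd s \<and> d dvd t}. weight d)"
proof -
  from st obtain A B where st: "s = prod_p A" "t = prod_p B" and AB: "A \<in> T" "B \<in> T" by blast
  have AB_I: "A \<subseteq> I" "B \<subseteq> I" using AB T by auto
  have "inj_on prod_p (Pow (A \<inter> B))" using AB_I by (intro inj_on_subset[OF inj_on_prod_p]) auto
  hence "(\<Sum>d \<in> {d \<in> prod_p ` T. d dvd s \<and> d dvd t}. weight d) = (\<Sum>C \<in> Pow (A \<inter> B). weight (prod_p C))"
    by (simp add: st common_divisors_prod_p[OF T down_closed AB] sum.reindex)
  thus ?thesis using lcm_prod_p[OF AB_I] by (simp add: st)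
qed

theorem lcm_matrix_inertia_down_closed:
  assumes T: "T \<subseteq> Pow I" and down_closed: "\<And>A C. A \<in> T \<Longrightarrow> C \<subseteq> A \<Longrightarrow> C \<in> T"
  shows "invertible_mat (lcm_matrix (prod_p ` T))"
    and "pos_inertia (lcm_matrix (prod_p ` T)) = card {A \<in> T. even (card A)}"
    and "neg_inertia (lcm_matrix (prod_p ` T)) = card {A \<in> T. odd (card A)}"
proof -
  have "finite T" using finite_subset[OF T] finite_I by simp
  hence fin: "finite (prod_p ` T)" by simp
  have zero: "0 \<notin> prod_p ` T" using prod_p_pos T by (auto simp: image_iff)
  have sign: "0 < weight (prod_p A) \<longleftrightarrow> even (card A)" "weight (prod_p A) < 0 \<longleftrightarrow> odd (card A)"
    if "A \<in> T" for A
    using weight_prod_p_sign[of A] T that by (cases "even (card A)"; force simp: sgn_1_pos sgn_1_neg)+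
  have weight_nz: "weight d \<noteq> 0" if "d \<in> prod_p ` T" for d using sign that by fastforce
  have count: "card {d \<in> prod_p ` T. P d} = card {A \<in> T. P (prod_p A)}" for P
  proof -
    have "inj_on prod_p {A \<in> T. P (prod_p A)}" using T by (intro inj_on_subset[OF inj_on_prod_p]) auto
    moreover have "{d \<in> prod_p ` T. P d} = prod_p ` {A \<in> T. P (prod_p A)}" by auto
    ultimately show ?thesis by (simp add: card_image)
  qed
  have "{A \<in> T. 0 < weight (prod_p A)} = {A \<in> T. even (card A)}"
    "{A \<in> T. weight (prod_p A) < 0} = {A \<in> T. odd (card A)}" using sign by auto
  thus "invertible_mat (lcm_matrix (prod_p ` T))"
    and "pos_inertia (lcm_matrix (prod_p ` T)) = card {A \<in> T. even (card A)}"
    and "neg_inertia (lcm_matrix (prod_p ` T)) = card {A \<in> T. odd (card A)}"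
    using lcm_matrix_inertia_from_divisor_sum[OF fin zero weight_nz
        lcm_eq_sum_weight_common_divisors[OF T down_closed]] count by simp_all
qed

end

lemma subsets_card_le_2:
  "{A. A \<subseteq> {1..m} \<and> card A \<le> 2} = {{}} \<union> (\<lambda>i. {i}) ` {1..m} \<union> {{i, j} | i j. 1 \<le> i \<and> i < j \<and> j \<le> (m :: nat)}"
proof (intro equalityI subsetI)
  fix A assume A: "A \<in> {A. A \<subseteq> {1..m} \<and> card A \<le> 2}"
  hence "card A = 0 \<or> card A = 1 \<or> card A = 2" by auto
  moreover have "finite A" using A finite_subset by auto
  ultimately consider "A = {}" | i where "A = {i}" | i j where "A = {i, j}" "i < j"
    by (auto simp: card_1_singleton_iff card_2_iff) (metis insert_commute linorder_neqE_nat)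
  thus "A \<in> {{}} \<union> (\<lambda>i. {i}) ` {1..m} \<union> {{i, j} | i j. 1 \<le> i \<and> i < j \<and> j \<le> m}"
    using A by cases auto
qed (auto simp: card_insert_if)

lemma card_subsets_card_le_2:
  assumes "finite X"
  shows "card {A. A \<subseteq> X \<and> card A \<le> 2 \<and> even (card A)} = 1 + (card X choose 2)"
    and "card {A. A \<subseteq> X \<and> card A \<le> 2 \<and> odd (card A)} = card X"
    and "card {A. A \<subseteq> X \<and> card A \<le> 2} = 1 + card X + (card X choose 2)"
proof -
  have "{A. A \<subseteq> X \<and> card A \<le> 2 \<and> even (card A)} = {A. A \<subseteq> X \<and> card A = 0} \<union> {A. A \<subseteq> X \<and> card A = 2}"
    by (auto simp: le_Suc_eq numeral_2_eq_2)
  also have "card \<dots> = (card X choose 0) + (card X choose 2)"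
    using assms by (subst card_Un_disjoint) (auto simp: n_subsets)
  finally show even: "card {A. A \<subseteq> X \<and> card A \<le> 2 \<and> even (card A)} = 1 + (card X choose 2)" by simp
  have "{A. A \<subseteq> X \<and> card A \<le> 2 \<and> odd (card A)} = {A. A \<subseteq> X \<and> card A = 1}"
    by (auto simp: le_Suc_eq numeral_2_eq_2)
  thus odd: "card {A. A \<subseteq> X \<and> card A \<le> 2 \<and> odd (card A)} = card X"
    using assms by (simp add: n_subsets)
  have "{A. A \<subseteq> X \<and> card A \<le> 2}
      = {A. A \<subseteq> X \<and> card A \<le> 2 \<and> even (card A)} \<union> {A. A \<subseteq> X \<and> card A \<le> 2 \<and> odd (card A)}" by auto
  also have "card \<dots> = 1 + card X + (card X choose 2)"
    using assms even odd by (subst card_Un_disjoint) auto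
  finally show "card {A. A \<subseteq> X \<and> card A \<le> 2} = 1 + card X + (card X choose 2)" .
qed

theorem mainTheorem16:
  fixes m :: nat and p :: "nat \<Rightarrow> nat" and S :: "nat set"
  assumes "m \<ge> 1"
    and "\<forall>i\<in>{1..m}. prime (p i)"
    and "inj_on p {1..m}"
    and "S = {1} \<union> p ` {1..m} \<union> {p i * p j | i j. 1 \<le> i \<and> i < j \<and> j \<le> m}"
  shows "2 * card S = m^2 + m + 2
    \<and> invertible_mat (lcm_matrix S)
    \<and> neg_inertia (lcm_matrix S) = m
    \<and> pos_inertia (lcm_matrix S) = 1 + (m choose 2)
    \<and> 2 * pos_inertia (lcm_matrix S) = m^2 - m + 2"
proof -
  interpret distinct_primes p "{1..m}" using assms(2,3) by unfold_locales auto
  define T where "T = {A. A \<subseteq> {1..m} \<and> card A \<le> 2}"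
  have "prod_p ` {{i, j} | i j. 1 \<le> i \<and> i < j \<and> j \<le> m} = {p i * p j | i j. 1 \<le> i \<and> i < j \<and> j \<le> m}"
    by (rule prod_p_image_doubletons) simp
  hence "S = prod_p ` T"
    unfolding assms(4) T_def subsets_card_le_2 image_Un by (simp add: prod_p_def image_image)
  have T_Pow: "T \<subseteq> Pow {1..m}" by (auto simp: T_def)
  have down_closed: "C \<in> T" if "A \<in> T" "C \<subseteq> A" for A C
  proof -
    have "finite A" using that(1) finite_subset by (auto simp: T_def)
    thus ?thesis using that card_mono[of A C] by (auto simp: T_def)
  qed
  note inertia = lcm_matrix_inertia_down_closed[OF T_Pow down_closed, folded \<open>S = prod_p ` T\<close>]
  have counts: "card {A \<in> T. even (card A)} = 1 + (m choose 2)" "card {A \<in> T. odd (card A)} = m"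
    using card_subsets_card_le_2[of "{1..m}"] by (simp_all add: T_def conj_assoc)
  have card_S: "card S = 1 + m + (m choose 2)"
    unfolding \<open>S = prod_p ` T\<close> using card_subsets_card_le_2(3)[of "{1..m}"]
    by (subst card_image) (auto simp: T_def intro!: inj_on_subset[OF inj_on_prod_p])
  have "2 * (m choose 2) + m = m^2"
    by (induction m) (simp_all add: numeral_2_eq_2 power2_eq_square algebra_simps)
  with card_S inertia counts show ?thesis by auto
qed

end
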